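(* Let $D\subset\mathbb{C}$ be a planar regular region bounded by finitely many analytic Jordan curves, and let $z_0\in D$. Then $$\frac{(c_\beta(z_0))^2}{\pi}=\lim_{r\to 0+0}\frac{r}{g_{z_0}(-\log r)},$$ where $c_\beta(z_0)=\lim_{z\to z_0}\exp\big(G(z,z_0)-\log|z-z_0|\big)$.
   Context: $G(z,w)$ is the Green's function of $D$: $G(\cdot,w)$ is harmonic on $D\setminus\{w\}$, $G(z,w)-\log|z-w|$ is harmonic near $w$, $G(\cdot,w)<0$ on $D$ and $G(\cdot,w)=0$ on $\partial D$. For $t\ge 0$, $$g_{w}(t)=\inf\Big\{\int_{\{2G(\cdot,w)<-t\}}|f|^2\,d\lambda:\ f \text{ holomorphic on } \{2G(\cdot,w)<-t\},\ f(w)=1\Big\},$$ with $\lambda$ Lebesgue measure on $\mathbb{C}$. *)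

theory Defs
  imports "HOL-Complex_Analysis.Complex_Analysis"
begin

definition harmonic_on :: "(complex \<Rightarrow> real) \<Rightarrow> complex set \<Rightarrow> bool" where
  "harmonic_on u U \<longleftrightarrow> open U \<and>
     (\<forall>z\<in>U. \<exists>r>0. ball z r \<subseteq> U \<and>
        (\<exists>f. f holomorphic_on ball z r \<and> (\<forall>x\<in>ball z r. u x = Re (f x))))"

definition analytic_jordan_curve :: "complex set \<Rightarrow> bool" where
  "analytic_jordan_curve \<Gamma> \<longleftrightarrow>
     (\<exists>f U. open U \<and> sphere 0 1 \<subseteq> U \<and> f holomorphic_on U \<and> inj_on f U \<and>
            \<Gamma> = f ` sphere 0 1)"

definition regular_region :: "complex set \<Rightarrow> bool" where
  "regular_region D \<longleftrightarrow> open D \<and> connected D \<and> bounded D \<and> D \<noteq> {} \<and>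
     (\<exists>\<C>. finite \<C> \<and> \<C> \<noteq> {} \<and> (\<forall>\<Gamma>\<in>\<C>. analytic_jordan_curve \<Gamma>) \<and>
          pairwise disjnt \<C> \<and> frontier D = \<Union>\<C>)"

definition green_function :: "complex set \<Rightarrow> (complex \<Rightarrow> complex \<Rightarrow> real) \<Rightarrow> bool" where
  "green_function D G \<longleftrightarrow> (\<forall>w\<in>D.
      harmonic_on (\<lambda>z. G z w) (D - {w}) \<and>
      (\<exists>r>0. ball w r \<subseteq> D \<and> (\<exists>h. harmonic_on h (ball w r) \<and>
            (\<forall>z\<in>ball w r - {w}. G z w - ln (cmod (z - w)) = h z))) \<and>
      (\<forall>z\<in>D - {w}. G z w < 0) \<and>
      (\<forall>\<zeta>\<in>frontier D. ((\<lambda>z. G z w) \<longlongrightarrow> 0) (at \<zeta> within D)))"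

definition sublevel :: "complex set \<Rightarrow> (complex \<Rightarrow> complex \<Rightarrow> real) \<Rightarrow> complex \<Rightarrow> real \<Rightarrow> complex set" where
  "sublevel D G w t = {z\<in>D. z = w \<or> 2 * G z w < - t}"

definition min_integral :: "complex set \<Rightarrow> (complex \<Rightarrow> complex \<Rightarrow> real) \<Rightarrow> complex \<Rightarrow> real \<Rightarrow> ennreal" where
  "min_integral D G w t = (INF f\<in>{f. f holomorphic_on sublevel D G w t \<and> f w = 1}.
      set_nn_integral lborel (sublevel D G w t) (\<lambda>z. ennreal ((cmod (f z))\<^sup>2)))"

end

theory Submission
  imports Defs
begin

text \<open>Near the pole, \<open>G(z,z\<^sub>0) = log |z - z\<^sub>0| + h(z)\<close> with \<open>h\<close> continuous and
  \<open>c\<^sub>\<beta>(z\<^sub>0) = exp h(z\<^sub>0)\<close>. Hence for small \<open>r\<close> the sublevel set \<open>{2G < log r}\<close> lies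
  between two discs centred at \<open>z\<^sub>0\<close> whose areas are \<open>\<pi> r / c\<^sub>\<beta>(z\<^sub>0)\<^sup>2\<close> up to factors
  \<open>e\<^sup>\<epsilon>\<close> and \<open>e\<^sup>-\<^sup>\<epsilon>\<close>. The minimal integral is at most the area of the outer disc (take
  \<open>f = 1\<close>) and at least the area of the inner disc, by the sub-mean-value inequality
  \<open>\<pi> \<rho>\<^sup>2 |f(a)|\<^sup>2 \<le> \<integral>\<^sub>B\<^sub>(\<^sub>a\<^sub>,\<^sub>\<rho>\<^sub>) |f|\<^sup>2\<close>. The latter is proved by averaging \<open>f\<close> over
  the rotations by \<open>k\<close>-th roots of unity: the averages converge to \<open>f(a)\<close> pointwise, while
  rotation invariance of Lebesgue measure and Cauchy-Schwarz bound their \<open>L\<^sup>2\<close> norms by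
  that of \<open>f\<close>; Fatou's lemma concludes.\<close>

text \<open>Rotation invariance of Lebesgue measure on \<open>\<complex>\<close> is obtained on \<open>real^2\<close>, where the
  library's determinant formula for linear images is available.\<close>

definition complex_to_vec :: "complex \<Rightarrow> real^2" where
  "complex_to_vec z = (\<chi> i. if i = 1 then Re z else Im z)"

definition vec_to_complex :: "real^2 \<Rightarrow> complex" where
  "vec_to_complex v = Complex (v$1) (v$2)"

lemma vec_to_complex_to_vec [simp]: "vec_to_complex (complex_to_vec z) = z"
  by (simp add: vec_to_complex_def complex_to_vec_def)

lemma complex_to_vec_to_complex [simp]: "complex_to_vec (vec_to_complex v) = v"
  by (simp add: vec_to_complex_def complex_to_vec_def vec_eq_iff forall_2)

lemma complex_to_vec_measurable [measurable]: "complex_to_vec \<in> borel_measurable borel"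
proof -
  have "continuous_on UNIV complex_to_vec"
    unfolding complex_to_vec_def
  proof (rule continuous_on_vec_lambda)
    show "continuous_on UNIV (\<lambda>z. if i = 1 then Re z else Im z)" for i :: 2
      by (cases "i = 1") (simp_all add: continuous_intros)
  qed
  then show ?thesis by (rule borel_measurable_continuous_onI)
qed

lemma vec_to_complex_measurable [measurable]: "vec_to_complex \<in> borel_measurable borel"
proof -
  have "continuous_on UNIV vec_to_complex"
    unfolding vec_to_complex_def Complex_eq by (intro continuous_intros)
  then show ?thesis by (rule borel_measurable_continuous_onI)
qed

lemma lborel_distr_complex_to_vec: "distr lborel borel complex_to_vec = (lborel :: (real^2) measure)"
proof (rule lborel_eqI[symmetric])
  fix l u :: "real^2"
  assume le: "\<And>b. b \<in> Basis \<Longrightarrow> l \<bullet> b \<le> u \<bullet> b"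
  have Basis: "(Basis :: (real^2) set) = {axis 1 1, axis 2 1}"
    by (auto simp: Basis_vec_def axis_def UNIV_2)
  have "complex_to_vec -` box l u = box (Complex (l$1) (l$2)) (Complex (u$1) (u$2))"
    by (auto simp: box_def complex_to_vec_def Basis_vec_def Basis_complex_def axis_def
        inner_vec_def UNIV_2 sum_2)
  then have "emeasure (distr lborel borel complex_to_vec) (box l u)
      = emeasure lborel (box (Complex (l$1) (l$2)) (Complex (u$1) (u$2)))"
    by (simp add: emeasure_distr)
  also have "\<dots> = (u$1 - l$1) * (u$2 - l$2)"
    using le[of "axis 1 1"] le[of "axis 2 1"]
    by (subst emeasure_lborel_box_eq) (auto simp: Basis_complex_def Basis_vec_def inner_axis)
  also have "\<dots> = (\<Prod>b\<in>Basis. (u - l) \<bullet> b)"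
    by (simp add: Basis axis_eq_axis inner_axis)
  finally show "emeasure (distr lborel borel complex_to_vec) (box l u) = (\<Prod>b\<in>Basis. (u - l) \<bullet> b)" .
qed simp

lemma lborel_distr_vec_to_complex: "distr lborel borel vec_to_complex = (lborel :: complex measure)"
proof -
  have "distr lborel borel vec_to_complex
      = distr (distr (lborel :: complex measure) borel complex_to_vec) borel vec_to_complex"
    by (simp add: lborel_distr_complex_to_vec)
  also have "\<dots> = distr lborel borel (vec_to_complex \<circ> complex_to_vec)"
    by (rule distr_distr) simp_all
  also have "vec_to_complex \<circ> complex_to_vec = (\<lambda>x. x)"
    by (simp add: fun_eq_iff)
  finally show ?thesis
    by (simp add: distr_id2)
qed

definition rotate_vec :: "complex \<Rightarrow> real^2 \<Rightarrow> real^2" where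
  "rotate_vec w v = complex_to_vec (w * vec_to_complex v)"

lemma linear_rotate_vec: "linear (rotate_vec w)"
  by (rule linearI) (simp_all add: rotate_vec_def complex_to_vec_def vec_to_complex_def vec_eq_iff algebra_simps)

lemma det_matrix_rotate_vec: "det (matrix (rotate_vec w)) = (cmod w)\<^sup>2"
proof -
  have "det (matrix (rotate_vec w)) = Re w * Re w + Im w * Im w"
    by (simp add: det_2 matrix_def rotate_vec_def complex_to_vec_def vec_to_complex_def axis_def algebra_simps)
  then show ?thesis
    by (metis cmod_power2 power2_eq_square add.commute)
qed

lemma rotate_vec_measurable [measurable]: "rotate_vec w \<in> borel_measurable borel"
  unfolding rotate_vec_def by measurable

lemma rotate_vec_cnj_inverse:
  assumes "cmod w = 1"
  shows "rotate_vec (cnj w) (rotate_vec w v) = v"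
proof -
  have "cnj w * w = 1"
    using assms by (metis complex_norm_square mult.commute of_real_1 power_one)
  then show ?thesis
    by (simp add: rotate_vec_def mult.assoc[symmetric])
qed

lemma lborel_distr_rotate_vec:
  assumes w: "cmod w = 1"
  shows "distr lborel borel (rotate_vec w) = (lborel :: (real^2) measure)"
proof (rule lborel_eqI[symmetric])
  fix l u :: "real^2"
  assume le: "\<And>b. b \<in> Basis \<Longrightarrow> l \<bullet> b \<le> u \<bullet> b"
  have w': "cmod (cnj w) = 1" using w by simp
  have preimage: "rotate_vec w -` box l u = rotate_vec (cnj w) ` box l u"
    using rotate_vec_cnj_inverse[OF w] rotate_vec_cnj_inverse[OF w', simplified]
    by (auto intro: image_eqI[of _ _ "rotate_vec w x" for x])
  have emeasure_lebesgue: "emeasure lebesgue A = emeasure lborel A" if "A \<in> sets borel" for A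
    using that by (simp add: emeasure_completion main_part_sets)
  have "rotate_vec w -` box l u \<in> sets borel"
    using measurable_sets[OF rotate_vec_measurable, of "box l u" w] by simp
  then have "emeasure (distr lborel borel (rotate_vec w)) (box l u)
      = emeasure lebesgue (rotate_vec (cnj w) ` box l u)"
    by (simp add: emeasure_distr emeasure_lebesgue preimage)
  also have "\<dots> = ennreal (measure lebesgue (rotate_vec (cnj w) ` box l u))"
    by (rule emeasure_eq_measure2) (rule measurable_linear_image[OF linear_rotate_vec]; simp)
  also have "measure lebesgue (rotate_vec (cnj w) ` box l u) = measure lebesgue (box l u)"
    by (subst measure_linear_image[OF linear_rotate_vec]) (simp_all add: det_matrix_rotate_vec w)
  also have "ennreal (measure lebesgue (box l u)) = emeasure lborel (box l u)"
    by (simp add: emeasure_eq_measure2[symmetric] emeasure_lebesgue)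
  also have "\<dots> = (\<Prod>b\<in>Basis. (u - l) \<bullet> b)"
    using le by (simp add: emeasure_lborel_box_eq)
  finally show "emeasure (distr lborel borel (rotate_vec w)) (box l u) = (\<Prod>b\<in>Basis. (u - l) \<bullet> b)" .
qed simp

lemma lborel_distr_mult_complex:
  assumes "cmod w = 1"
  shows "distr lborel borel (\<lambda>z. w * z) = (lborel :: complex measure)"
proof -
  have "distr lborel borel (\<lambda>z. w * z) = distr (distr lborel borel vec_to_complex) borel (\<lambda>z. w * z)"
    by (simp add: lborel_distr_vec_to_complex)
  also have "\<dots> = distr lborel borel (vec_to_complex \<circ> rotate_vec w)"
    by (subst distr_distr) (simp_all add: comp_def rotate_vec_def)
  also have "\<dots> = distr (distr lborel borel (rotate_vec w)) borel vec_to_complex"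
    by (rule distr_distr[symmetric]) simp_all
  finally show ?thesis
    by (simp add: lborel_distr_rotate_vec[OF assms] lborel_distr_vec_to_complex)
qed

lemma nn_integral_mult_complex:
  assumes "cmod w = 1" and "g \<in> borel_measurable borel"
  shows "(\<integral>\<^sup>+ z. g (w * z) \<partial>lborel) = (\<integral>\<^sup>+ z. g z \<partial>(lborel :: complex measure))"
  using nn_integral_distr[of "\<lambda>z. w * z" lborel borel g] assms
  by (simp add: lborel_distr_mult_complex)

lemma nn_integral_plus_lborel:
  fixes a :: "'a::euclidean_space"
  assumes "g \<in> borel_measurable borel"
  shows "(\<integral>\<^sup>+ z. g (a + z) \<partial>lborel) = (\<integral>\<^sup>+ z. g z \<partial>lborel)"
  using nn_integral_distr[of "(+) a" lborel borel g] assms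
  by (simp add: lborel_distr_plus)

lemma emeasure_lborel_ball_complex:
  assumes "0 \<le> \<rho>"
  shows "emeasure lborel (ball (a::complex) \<rho>) = ennreal (pi * \<rho>\<^sup>2)"
  using assms by (simp add: emeasure_ball unit_ball_vol_2)

lemma sum_powers_root_of_unity_eq_0:
  assumes "0 < m" "m < k"
  shows "(\<Sum>j<k. (cis (2*pi/k) ^ m) ^ j) = 0"
proof -
  let ?w = "cis (2*pi/k) ^ m"
  have k: "k > 0" using assms by simp
  have w: "?w = cis (2 * pi * real m / real k)"
    by (subst Complex.DeMoivre) (simp add: field_simps)
  have "cis (2 * pi * real m / real k) \<noteq> cis (2 * pi * real 0 / real k)"
    using inj_onD[OF conjunct1[OF Complex.bij_betw_roots_unity[OF k, unfolded bij_betw_def]], of m 0] assms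
    by auto
  then have "?w \<noteq> 1" using w by simp
  moreover have "?w ^ k = 1"
  proof -
    have "?w ^ k = cis (2*pi/k) ^ (k * m)" by (simp add: power_mult[symmetric] mult.commute)
    also have "\<dots> = cis (2 * pi * real m)" using k by (simp add: Complex.DeMoivre field_simps)
    finally show ?thesis by (simp add: complex_eq_iff cos_eq_1 sin_eq_0)
  qed
  ultimately show ?thesis by (subst geometric_sum) simp_all
qed

text \<open>Averaging over the \<open>k\<close>-th roots of unity kills the coefficients \<open>1, \<dots>, k - 1\<close>.\<close>
lemma norm_powser_root_of_unity_average_le:
  fixes c :: "nat \<Rightarrow> complex"
  assumes k: "k > 0" and summable: "summable (\<lambda>m. norm (c m * z ^ m))"
  defines "\<omega> \<equiv> cis (2*pi/k)"
  shows "norm ((\<Sum>j<k. \<Sum>m. c m * (\<omega>^j * z)^m) / of_nat k - c 0)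
           \<le> (\<Sum>m. norm (c m * z ^ m)) - (\<Sum>m<k. norm (c m * z ^ m))"
proof -
  define a where "a = (\<lambda>m. norm (c m * z ^ m))"
  have summable_a: "summable a" using summable by (simp add: a_def)
  define E where "E m = (\<Sum>j<k. (\<omega>^m)^j) / of_nat k" for m
  define d where "d m = c m * z^m * E m" for m
  define A where "A = (\<Sum>j<k. \<Sum>m. c m * (\<omega>^j * z)^m) / of_nat k"
  have norm_\<omega>: "norm \<omega> = 1" by (simp add: \<omega>_def)
  have "(\<lambda>m. c m * (\<omega>^j * z)^m) sums (\<Sum>m. c m * (\<omega>^j * z)^m)" for j
    by (rule summable_sums, rule summable_norm_cancel)
       (use summable in \<open>simp add: norm_mult norm_power norm_\<omega>\<close>)
  then have "(\<lambda>m. (\<Sum>j<k. c m * (\<omega>^j * z)^m) / of_nat k) sums A"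
    unfolding A_def by (intro sums_divide sums_sum)
  moreover have "(\<Sum>j<k. c m * (\<omega>^j * z)^m) / of_nat k = d m" for m
    by (simp add: d_def E_def sum_distrib_left sum_divide_distrib power_mult_distrib
        power_mult[symmetric] mult.commute mult.left_commute)
  ultimately have "d sums A" by simp
  moreover have "(\<Sum>m<k. d m) = c 0"
  proof -
    have "(\<Sum>m<k. d m) = d 0 + (\<Sum>m\<in>{1..<k}. d m)"
      using k by (simp add: lessThan_atLeast0 sum.atLeast_Suc_lessThan)
    also have "(\<Sum>m\<in>{1..<k}. d m) = 0"
      by (rule sum.neutral) (auto simp: d_def E_def \<omega>_def sum_powers_root_of_unity_eq_0)
    finally show ?thesis using k by (simp add: d_def E_def)
  qed
  ultimately have "(\<lambda>i. d (i + k)) sums (A - c 0)"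
    by (subst sums_iff_shift) simp
  then have "norm (A - c 0) = norm (\<Sum>i. d (i + k))" by (simp add: sums_iff)
  also have "\<dots> \<le> (\<Sum>i. a (i + k))"
  proof (rule norm_suminf_le)
    have "norm (E m) \<le> 1" for m
    proof -
      have "norm (\<Sum>j<k. (\<omega>^m)^j) \<le> (\<Sum>j<k. norm ((\<omega>^m)^j))" by (rule norm_sum)
      also have "\<dots> = of_nat k" by (simp add: norm_power norm_\<omega>)
      finally show ?thesis using k by (simp add: E_def norm_divide)
    qed
    then show "norm (d (i + k)) \<le> a (i + k)" for i
      by (simp add: d_def a_def norm_mult mult_left_le)
    show "summable (\<lambda>i. a (i + k))"
      using summable_a by (simp add: summable_iff_shift)
  qed
  also have "\<dots> = suminf a - (\<Sum>m<k. a m)"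
    using suminf_split_initial_segment[OF summable_a, of k] by simp
  finally show ?thesis by (simp add: A_def a_def)
qed

lemma holomorphic_root_of_unity_average_tendsto:
  assumes f: "f holomorphic_on ball 0 \<rho>" and z: "z \<in> ball 0 \<rho>"
  shows "(\<lambda>n. (\<Sum>j<Suc n. f (cis (2*pi/Suc n)^j * z)) / of_nat (Suc n)) \<longlonglongrightarrow> f 0"
proof -
  define c where "c m = (deriv ^^ m) f 0 / fact m" for m
  have f_eq: "f y = (\<Sum>m. c m * y^m)" if "y \<in> ball 0 \<rho>" for y
    using holomorphic_power_series[OF f that] by (simp add: c_def sums_iff)
  define s where "s = (norm z + \<rho>) / 2"
  have s: "norm z < s" "s < \<rho>" using z by (auto simp: s_def)
  moreover have "0 \<le> s" using s(1) norm_ge_zero[of z] by linarith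
  ultimately have "complex_of_real s \<in> ball 0 \<rho>" by simp
  then have "summable (\<lambda>m. c m * (complex_of_real s)^m)"
    using holomorphic_power_series[OF f] by (simp add: c_def sums_iff)
  then have summable: "summable (\<lambda>m. norm (c m * z^m))"
    by (rule powser_insidea) (use s in simp)
  define a where "a = (\<lambda>m. norm (c m * z ^ m))"
  have bound: "norm ((\<Sum>j<Suc n. f (cis (2*pi/Suc n)^j * z)) / of_nat (Suc n) - f 0)
      \<le> suminf a - (\<Sum>m<Suc n. a m)" for n
  proof -
    have "f (cis (2*pi/Suc n)^j * z) = (\<Sum>m. c m * (cis (2*pi/Suc n)^j * z)^m)" for j
      using z by (intro f_eq) (simp add: norm_mult norm_power)
    moreover have "f 0 = c 0" using f_eq[of 0] z by (simp add: c_def)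
    ultimately show ?thesis
      using norm_powser_root_of_unity_average_le[OF zero_less_Suc summable] by (simp add: a_def)
  qed
  have "(\<lambda>n. suminf a - (\<Sum>m<Suc n. a m)) \<longlonglongrightarrow> suminf a - suminf a"
    using summable unfolding a_def[symmetric]
    by (intro tendsto_diff tendsto_const LIMSEQ_Suc summable_LIMSEQ)
  then have "(\<lambda>n. (\<Sum>j<Suc n. f (cis (2*pi/Suc n)^j * z)) / of_nat (Suc n) - f 0) \<longlonglongrightarrow> 0"
    by (intro Lim_null_comparison[OF always_eventually[OF allI[OF bound]]]) simp
  then show ?thesis by (rule LIM_zero_cancel)
qed

lemma cmod_average_square_le:
  fixes w :: "nat \<Rightarrow> complex"
  assumes "k > 0"
  shows "(cmod ((\<Sum>j<k. w j) / of_nat k))\<^sup>2 \<le> (\<Sum>j<k. (cmod (w j))\<^sup>2) / of_nat k"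
proof -
  have "(cmod (\<Sum>j<k. w j))\<^sup>2 \<le> (\<Sum>j<k. cmod (w j))\<^sup>2"
    by (intro power_mono norm_sum) simp
  also have "\<dots> \<le> (\<Sum>j<k. (cmod (w j))\<^sup>2) * of_nat k"
    using sum_squared_le_sum_of_squares[of "\<lambda>j. cmod (w j)" "{..<k}"] by simp
  finally show ?thesis
    using assms by (simp add: norm_divide power_divide field_simps power2_eq_square)
qed

lemma borel_measurable_indicator_cmod_square:
  assumes "open U" "continuous_on U F"
  shows "(\<lambda>z. indicator U z * (cmod (F z))\<^sup>2) \<in> borel_measurable borel"
proof -
  have "continuous_on U (\<lambda>z. (cmod (F z))\<^sup>2)"
    by (intro continuous_intros assms)
  then have "(\<lambda>z. indicator U z *\<^sub>R (cmod (F z))\<^sup>2) \<in> borel_measurable borel"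
    by (rule borel_measurable_continuous_on_indicator[rotated]) (simp add: assms)
  then show ?thesis by simp
qed

lemma nn_integral_average_rotations:
  fixes h :: "complex \<Rightarrow> real"
  assumes w: "cmod w = 1" and k: "k > 0"
    and h: "h \<in> borel_measurable borel" "\<And>z. 0 \<le> h z"
  shows "(\<integral>\<^sup>+ z. ennreal ((\<Sum>j<k. h (w^j * z)) / k) \<partial>lborel) = (\<integral>\<^sup>+ z. ennreal (h z) \<partial>lborel)"
proof -
  have "(\<integral>\<^sup>+ z. ennreal ((\<Sum>j<k. h (w^j * z)) / k) \<partial>lborel)
      = (\<integral>\<^sup>+ z. ennreal (1 / k) * (\<Sum>j<k. ennreal (h (w^j * z))) \<partial>lborel)"
    by (intro nn_integral_cong)
       (simp add: h sum_nonneg sum_ennreal ennreal_mult[symmetric] del: sum_ennreal[symmetric])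
  also have "\<dots> = ennreal (1 / k) * (\<Sum>j<k. \<integral>\<^sup>+ z. ennreal (h (w^j * z)) \<partial>lborel)"
    using h(1) by (simp add: nn_integral_cmult nn_integral_sum)
  also have "\<dots> = ennreal (1 / k) * (of_nat k * \<integral>\<^sup>+ z. ennreal (h z) \<partial>lborel)"
    using nn_integral_mult_complex[of "w^_" "\<lambda>z. ennreal (h z)"] w h(1) by (simp add: norm_power)
  also have "\<dots> = (\<integral>\<^sup>+ z. ennreal (h z) \<partial>lborel)"
    using k by (simp add: mult.assoc[symmetric] ennreal_of_nat_eq_real_of_nat ennreal_mult[symmetric])
  finally show ?thesis .
qed

lemma sub_mean_value_cmod_square_ball_origin:
  assumes f: "f holomorphic_on ball 0 \<rho>" and \<rho>: "\<rho> > 0"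
  shows "ennreal (pi * \<rho>\<^sup>2 * (cmod (f 0))\<^sup>2)
           \<le> (\<integral>\<^sup>+ z. ennreal (indicator (ball 0 \<rho>) z * (cmod (f z))\<^sup>2) \<partial>lborel)"
proof -
  define B where "B = ball (0::complex) \<rho>"
  define h where "h z = indicator B z * (cmod (f z))\<^sup>2" for z
  define \<omega> where "\<omega> n = cis (2*pi/Suc n)" for n
  define A where "A n z = (\<Sum>j<Suc n. f (\<omega> n ^ j * z)) / of_nat (Suc n)" for n z
  define u where "u n z = ennreal (indicator B z * (cmod (A n z))\<^sup>2)" for n z
  have norm_\<omega>: "cmod (\<omega> n ^ j) = 1" for n j by (simp add: \<omega>_def norm_power)
  have in_B: "\<omega> n ^ j * z \<in> B \<longleftrightarrow> z \<in> B" for n j z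
    by (simp add: B_def norm_mult norm_\<omega>)
  have h_nonneg: "0 \<le> h z" for z by (simp add: h_def)
  have f_cont: "continuous_on B f"
    using holomorphic_on_imp_continuous_on[OF f] by (simp add: B_def)
  have h_meas: "h \<in> borel_measurable borel"
    unfolding h_def[abs_def] by (rule borel_measurable_indicator_cmod_square) (simp_all add: f_cont[unfolded B_def] B_def)
  have "continuous_on B (A n)" for n
  proof -
    have "continuous_on B (\<lambda>z. f (\<omega> n ^ j * z))" for j
      by (rule continuous_on_compose2[OF f_cont]) (auto intro!: continuous_intros simp: in_B)
    then show ?thesis unfolding A_def by (intro continuous_intros) (auto simp del: of_nat_Suc)
  qed
  then have u_meas: "u n \<in> borel_measurable borel" for n
    unfolding u_def[abs_def] using borel_measurable_indicator_cmod_square[of B "A n"]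
    by (simp add: B_def)
  have u_integral_le: "(\<integral>\<^sup>+ z. u n z \<partial>lborel) \<le> (\<integral>\<^sup>+ z. ennreal (h z) \<partial>lborel)" for n
  proof -
    have "u n z \<le> ennreal ((\<Sum>j<Suc n. h (\<omega> n ^ j * z)) / Suc n)" for z
    proof (cases "z \<in> B")
      case True
      then show ?thesis
        using cmod_average_square_le[of "Suc n" "\<lambda>j. f (\<omega> n ^ j * z)"]
        by (auto simp: u_def h_def A_def in_B intro!: ennreal_leI simp del: of_nat_Suc)
    qed (simp add: u_def)
    then have "(\<integral>\<^sup>+ z. u n z \<partial>lborel)
        \<le> (\<integral>\<^sup>+ z. ennreal ((\<Sum>j<Suc n. h (\<omega> n ^ j * z)) / Suc n) \<partial>lborel)"
      by (intro nn_integral_mono)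
    also have "\<dots> = (\<integral>\<^sup>+ z. ennreal (h z) \<partial>lborel)"
      using norm_\<omega>[of n 1] h_meas by (intro nn_integral_average_rotations) (simp_all add: h_nonneg)
    finally show ?thesis .
  qed
  have u_lim: "(\<lambda>n. u n z) \<longlonglongrightarrow> ennreal (indicator B z * (cmod (f 0))\<^sup>2)" for z
  proof (cases "z \<in> B")
    case True
    have "(\<lambda>n. A n z) \<longlonglongrightarrow> f 0"
      using holomorphic_root_of_unity_average_tendsto[OF f True[unfolded B_def]]
      by (simp add: A_def \<omega>_def)
    then show ?thesis
      using True by (simp add: u_def) (intro tendsto_ennrealI tendsto_intros)
  qed (simp add: u_def)
  have "(\<integral>\<^sup>+ z. ennreal (indicator B z * (cmod (f 0))\<^sup>2) \<partial>lborel)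
      = (\<integral>\<^sup>+ z. liminf (\<lambda>n. u n z) \<partial>lborel)"
    by (intro nn_integral_cong) (simp add: lim_imp_Liminf[OF trivial_limit_sequentially u_lim])
  also have "\<dots> \<le> liminf (\<lambda>n. \<integral>\<^sup>+ z. u n z \<partial>lborel)"
    by (rule nn_integral_liminf) (simp add: u_meas measurable_lborel1)
  also have "\<dots> \<le> (\<integral>\<^sup>+ z. ennreal (h z) \<partial>lborel)"
    by (rule Liminf_le) (simp_all add: u_integral_le)
  finally have fatou: "(\<integral>\<^sup>+ z. ennreal (indicator B z * (cmod (f 0))\<^sup>2) \<partial>lborel)
      \<le> (\<integral>\<^sup>+ z. ennreal (h z) \<partial>lborel)" .
  have "(\<integral>\<^sup>+ z. ennreal (indicator B z * (cmod (f 0))\<^sup>2) \<partial>lborel)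
      = ennreal ((cmod (f 0))\<^sup>2) * emeasure lborel B"
    by (subst nn_integral_cmult_indicator[symmetric]) (auto simp: B_def indicator_def intro!: nn_integral_cong)
  then show ?thesis
    using fatou \<rho> by (simp add: h_def B_def emeasure_lborel_ball_complex ennreal_mult[symmetric] mult_ac)
qed

lemma sub_mean_value_cmod_square_ball:
  assumes f: "f holomorphic_on ball a \<rho>" and \<rho>: "\<rho> > 0"
  shows "ennreal (pi * \<rho>\<^sup>2 * (cmod (f a))\<^sup>2)
           \<le> set_nn_integral lborel (ball a \<rho>) (\<lambda>z. ennreal ((cmod (f z))\<^sup>2))"
proof -
  define h where "h z = ennreal (indicator (ball a \<rho>) z * (cmod (f z))\<^sup>2)" for z
  have h_meas: "h \<in> borel_measurable borel"
    unfolding h_def[abs_def] using borel_measurable_indicator_cmod_square[of "ball a \<rho>" f]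
    by (simp add: holomorphic_on_imp_continuous_on[OF f])
  have "(\<lambda>z. f (a + z)) holomorphic_on ball 0 \<rho>"
    by (rule holomorphic_on_compose_gen[of _ _ _ "ball a \<rho>", unfolded o_def])
       (auto intro!: holomorphic_intros f simp: dist_norm)
  then have "ennreal (pi * \<rho>\<^sup>2 * (cmod (f a))\<^sup>2)
      \<le> (\<integral>\<^sup>+ z. ennreal (indicator (ball 0 \<rho>) z * (cmod (f (a + z)))\<^sup>2) \<partial>lborel)"
    using sub_mean_value_cmod_square_ball_origin[OF _ \<rho>] by fastforce
  also have "\<dots> = (\<integral>\<^sup>+ z. h (a + z) \<partial>lborel)"
    by (intro nn_integral_cong) (simp add: h_def indicator_def dist_norm)
  also have "\<dots> = (\<integral>\<^sup>+ z. h z \<partial>lborel)"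
    by (rule nn_integral_plus_lborel[OF h_meas])
  also have "\<dots> = set_nn_integral lborel (ball a \<rho>) (\<lambda>z. ennreal ((cmod (f z))\<^sup>2))"
    by (intro nn_integral_cong) (simp add: h_def indicator_def)
  finally show ?thesis .
qed

lemma harmonic_on_imp_continuous_on:
  assumes "harmonic_on u U"
  shows "continuous_on U u"
proof -
  have U: "open U" using assms by (simp add: harmonic_on_def)
  show ?thesis unfolding continuous_on_eq_continuous_at[OF U]
  proof
    fix z assume "z \<in> U"
    then obtain r f where r: "r > 0" "ball z r \<subseteq> U" and f: "f holomorphic_on ball z r"
      and u: "\<forall>x\<in>ball z r. u x = Re (f x)"
      using assms by (auto simp: harmonic_on_def)
    have "continuous_on (ball z r) (\<lambda>x. Re (f x))"
      by (intro continuous_intros holomorphic_on_imp_continuous_on[OF f])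
    then have "continuous_on (ball z r) u"
      using u by (metis (mono_tags, lifting) continuous_on_cong)
    then show "isCont u z"
      using r by (simp add: continuous_on_eq_continuous_at)
  qed
qed

text \<open>A function continuous on \<open>D - {z\<^sub>0}\<close> and tending to \<open>0\<close> at the boundary extends
  continuously to the compact set \<open>closure D - ball z\<^sub>0 \<delta>\<close>, where it attains a minimum.\<close>
lemma bounded_below_away_from_point:
  fixes u :: "complex \<Rightarrow> real"
  assumes D: "bounded D" "open D" and u: "continuous_on (D - {z0}) u"
    and boundary: "\<forall>\<zeta>\<in>frontier D. (u \<longlongrightarrow> 0) (at \<zeta> within D)" and "\<delta> > 0"
  shows "\<exists>M. \<forall>z\<in>D. \<delta> \<le> dist z z0 \<longrightarrow> -M \<le> u z"
proof -
  define K where "K = closure D \<inter> {z. \<delta> \<le> dist z z0}"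
  define F where "F z = (if z \<in> D then u z else 0)" for z
  have "compact K" unfolding K_def
    by (intro compact_Int_closed closed_Collect_le continuous_intros) (simp add: compact_closure D)
  moreover have "continuous_on K F"
    unfolding continuous_on_eq_continuous_within
  proof
    fix p assume p: "p \<in> K"
    show "continuous (at p within K) F"
    proof (cases "p \<in> D")
      case True
      have "p \<noteq> z0" using p \<open>\<delta> > 0\<close> by (auto simp: K_def)
      then have "isCont u p"
        using u True D(2) by (simp add: continuous_on_eq_continuous_at open_delete)
      moreover have "\<forall>\<^sub>F x in nhds p. F x = u x"
        using True D(2) by (auto simp: F_def eventually_nhds)
      ultimately show ?thesis
        using isCont_cong continuous_at_imp_continuous_at_within by blast
    next
      case False
      then have "p \<in> frontier D" using p D(2) by (auto simp: K_def frontier_def interior_open)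
      then have "(u \<longlongrightarrow> 0) (at p within D)" using boundary by auto
      then show ?thesis
        using False unfolding continuous_within Lim_within by (fastforce simp: F_def)
    qed
  qed
  ultimately have "K = {} \<or> (\<exists>x\<in>K. \<forall>y\<in>K. F x \<le> F y)"
    using continuous_attains_inf by blast
  then obtain M where "\<forall>y\<in>K. -M \<le> F y"
    by (metis equals0D minus_minus)
  then show ?thesis
    using closure_subset[of D] unfolding K_def F_def by (intro exI[of _ M]) force
qed

lemma min_integral_le_area:
  assumes "sublevel D G w t \<subseteq> ball w \<rho>" and "0 \<le> \<rho>"
  shows "min_integral D G w t \<le> ennreal (pi * \<rho>\<^sup>2)"
proof -
  have "min_integral D G w t \<le> set_nn_integral lborel (sublevel D G w t) (\<lambda>z. ennreal ((cmod (1::complex))\<^sup>2))"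
    unfolding min_integral_def by (rule INF_lower) simp
  also have "\<dots> \<le> (\<integral>\<^sup>+ z. indicator (ball w \<rho>) z \<partial>lborel)"
    using assms(1) by (intro nn_integral_mono) (auto simp: indicator_def)
  also have "\<dots> = ennreal (pi * \<rho>\<^sup>2)"
    using assms(2) by (simp add: emeasure_lborel_ball_complex)
  finally show ?thesis .
qed

lemma area_le_min_integral:
  assumes "ball w \<rho> \<subseteq> sublevel D G w t" and "0 < \<rho>"
  shows "ennreal (pi * \<rho>\<^sup>2) \<le> min_integral D G w t"
  unfolding min_integral_def
proof (rule INF_greatest)
  fix f assume "f \<in> {f. f holomorphic_on sublevel D G w t \<and> f w = 1}"
  then have f: "f holomorphic_on ball w \<rho>" "f w = 1"
    using assms(1) holomorphic_on_subset by auto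
  have "ennreal (pi * \<rho>\<^sup>2) \<le> set_nn_integral lborel (ball w \<rho>) (\<lambda>z. ennreal ((cmod (f z))\<^sup>2))"
    using sub_mean_value_cmod_square_ball[OF f(1) assms(2)] f(2) by simp
  also have "\<dots> \<le> set_nn_integral lborel (sublevel D G w t) (\<lambda>z. ennreal ((cmod (f z))\<^sup>2))"
    using assms(1) by (intro nn_integral_mono) (auto simp: indicator_def)
  finally show "ennreal (pi * \<rho>\<^sup>2) \<le> set_nn_integral lborel (sublevel D G w t) (\<lambda>z. ennreal ((cmod (f z))\<^sup>2))" .
qed

lemma ln_sqrt_mult_exp:
  assumes "0 < r"
  shows "ln (sqrt r * exp x) = ln r / 2 + x"
  using assms by (simp add: ln_mult ln_sqrt)

lemma ball_subset_sublevel_eventually: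
  assumes "ball z0 \<delta> \<subseteq> D" and "0 < \<delta>"
    and near: "\<forall>z\<in>ball z0 \<delta> - {z0}. \<bar>G z z0 - ln (cmod (z - z0)) - a\<bar> < \<epsilon>"
  shows "\<forall>\<^sub>F r in at_right 0. ball z0 (sqrt r * exp (- a - \<epsilon>)) \<subseteq> sublevel D G z0 (- ln r)"
proof -
  have "((\<lambda>r. sqrt r * exp (- a - \<epsilon>)) \<longlongrightarrow> 0) (at_right 0)"
    by (rule tendsto_eq_intros refl tendsto_within_subset[OF tendsto_real_sqrt] tendsto_ident_at)+ simp
  then have "\<forall>\<^sub>F r in at_right 0. sqrt r * exp (- a - \<epsilon>) < \<delta>"
    using \<open>0 < \<delta>\<close> by (rule order_tendstoD)
  with eventually_at_right_less[of 0] show ?thesis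
  proof eventually_elim
    case (elim r)
    show ?case
    proof
      fix z assume z: "z \<in> ball z0 (sqrt r * exp (- a - \<epsilon>))"
      then have "z \<in> ball z0 \<delta>" using elim by auto
      moreover have "2 * G z z0 < ln r" if "z \<noteq> z0"
      proof -
        have "ln (cmod (z - z0)) < ln (sqrt r * exp (- a - \<epsilon>))"
          using z that elim by (subst ln_less_cancel_iff) (auto simp: dist_norm norm_minus_commute)
        moreover have "\<bar>G z z0 - ln (cmod (z - z0)) - a\<bar> < \<epsilon>"
          using near \<open>z \<in> ball z0 \<delta>\<close> that by blast
        ultimately show ?thesis
          using elim by (simp add: ln_sqrt_mult_exp)
      qed
      ultimately show "z \<in> sublevel D G z0 (- ln r)"
        using assms(1) by (auto simp: sublevel_def)
    qed
  qed
qed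

lemma sublevel_subset_ball_eventually:
  assumes near: "\<forall>z\<in>ball z0 \<delta> - {z0}. \<bar>G z z0 - ln (cmod (z - z0)) - a\<bar> < \<epsilon>"
    and away: "\<forall>z\<in>D. \<delta> \<le> dist z z0 \<longrightarrow> -M \<le> G z z0"
  shows "\<forall>\<^sub>F r in at_right 0. sublevel D G z0 (- ln r) \<subseteq> ball z0 (sqrt r * exp (- a + \<epsilon>))"
proof -
  have "\<forall>\<^sub>F r in at_right 0. ln r < -2 * M"
    using ln_at_0 unfolding filterlim_at_bot_dense by blast
  with eventually_at_right_less[of 0] show ?thesis
  proof eventually_elim
    case (elim r)
    show ?case
    proof
      fix z assume z: "z \<in> sublevel D G z0 (- ln r)"
      show "z \<in> ball z0 (sqrt r * exp (- a + \<epsilon>))"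
      proof (cases "z = z0")
        case False
        then have "z \<in> D" "2 * G z z0 < ln r" using z by (auto simp: sublevel_def)
        then have "z \<in> ball z0 \<delta>" using away elim by (force simp: dist_commute)
        then have "\<bar>G z z0 - ln (cmod (z - z0)) - a\<bar> < \<epsilon>" using near False by blast
        then have "ln (cmod (z - z0)) < ln (sqrt r * exp (- a + \<epsilon>))"
          using \<open>2 * G z z0 < ln r\<close> elim by (simp add: ln_sqrt_mult_exp)
        then show ?thesis
          using False elim by (subst (asm) ln_less_cancel_iff) (auto simp: dist_norm norm_minus_commute)
      qed (use elim in simp)
    qed
  qed
qed

lemma min_integral_asymptotic_bounds:
  assumes D: "open D" "bounded D"
    and G_cont: "continuous_on (D - {z0}) (\<lambda>z. G z z0)"
    and boundary: "\<forall>\<zeta>\<in>frontier D. ((\<lambda>z. G z z0) \<longlongrightarrow> 0) (at \<zeta> within D)"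
    and r0: "0 < r0" "ball z0 r0 \<subseteq> D" and h: "isCont h z0"
    and G_local: "\<forall>z\<in>ball z0 r0 - {z0}. G z z0 - ln (cmod (z - z0)) = h z"
    and "0 < \<epsilon>"
  shows "\<forall>\<^sub>F r in at_right 0.
           ennreal (pi * exp (-2 * h z0) * r * exp (-\<epsilon>)) \<le> min_integral D G z0 (- ln r) \<and>
           min_integral D G z0 (- ln r) \<le> ennreal (pi * exp (-2 * h z0) * r * exp \<epsilon>)"
proof -
  obtain d where d: "d > 0" "\<forall>z. dist z z0 < d \<longrightarrow> dist (h z) (h z0) < \<epsilon> / 2"
    using h \<open>0 < \<epsilon>\<close> unfolding continuous_at_eps_delta by (meson half_gt_zero)
  define \<delta> where "\<delta> = min d r0"
  have \<delta>: "0 < \<delta>" "ball z0 \<delta> \<subseteq> D"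
    using d r0 by (auto simp: \<delta>_def)
  have near: "\<forall>z\<in>ball z0 \<delta> - {z0}. \<bar>G z z0 - ln (cmod (z - z0)) - h z0\<bar> < \<epsilon> / 2"
    using G_local d by (auto simp: \<delta>_def dist_commute dist_real_def)
  obtain M where M: "\<forall>z\<in>D. \<delta> \<le> dist z z0 \<longrightarrow> -M \<le> G z z0"
    using bounded_below_away_from_point[OF D(2,1) G_cont boundary \<delta>(1)] by blast
  have area: "pi * (sqrt r * exp (- h z0 + s))\<^sup>2 = pi * exp (-2 * h z0) * r * exp (2 * s)"
    if "0 \<le> r" for r s
    using that by (simp add: power_mult_distrib exp_double[symmetric] exp_add[symmetric] algebra_simps)
  show ?thesis
    using ball_subset_sublevel_eventually[where G=G, OF \<delta>(2,1) near]
      sublevel_subset_ball_eventually[where G=G, OF near M]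
      eventually_at_right_less[of 0]
  proof eventually_elim
    case (elim r)
    then show ?case
      using area_le_min_integral[OF elim(1)] min_integral_le_area[OF elim(2)]
        area[of r "- \<epsilon> / 2"] area[of r "\<epsilon> / 2"]
      by (simp add: mult.assoc)
  qed
qed

lemma tendsto_of_exp_bounds:
  fixes f :: "'a \<Rightarrow> real"
  assumes bounds: "\<And>\<epsilon>. \<epsilon> > 0 \<Longrightarrow> \<forall>\<^sub>F x in F. T * exp (- \<epsilon>) \<le> f x \<and> f x \<le> T * exp \<epsilon>"
  shows "(f \<longlongrightarrow> T) F"
proof -
  have small: "\<exists>\<epsilon>>0. P \<epsilon>" if "\<forall>\<^sub>F \<epsilon> in at_right 0. P \<epsilon>" for P :: "real \<Rightarrow> bool"
    using eventually_happens'[OF trivial_limit_at_right_real eventually_conj[OF that eventually_at_right_less]]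
    by blast
  show ?thesis
  proof (rule order_tendstoI)
    fix y
    assume "y < T"
    moreover have "((\<lambda>\<epsilon>. T * exp (- \<epsilon>)) \<longlongrightarrow> T) (at_right 0)"
      by (auto intro!: tendsto_eq_intros)
    ultimately obtain \<epsilon> where "\<epsilon> > 0" "y < T * exp (- \<epsilon>)"
      using small order_tendstoD(1) by blast
    then show "\<forall>\<^sub>F x in F. y < f x"
      using bounds[of \<epsilon>] by (auto elim: eventually_mono)
  next
    fix y
    assume "T < y"
    moreover have "((\<lambda>\<epsilon>. T * exp \<epsilon>) \<longlongrightarrow> T) (at_right 0)"
      by (auto intro!: tendsto_eq_intros)
    ultimately obtain \<epsilon> where "\<epsilon> > 0" "T * exp \<epsilon> < y"
      using small order_tendstoD(2) by blast
    then show "\<forall>\<^sub>F x in F. f x < y"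
      using bounds[of \<epsilon>] by (auto elim: eventually_mono)
  qed
qed

lemma tendsto_ennreal_divide_at_right_0:
  fixes g :: "real \<Rightarrow> ennreal"
  assumes "0 < c"
    and bounds: "\<And>\<epsilon>. \<epsilon> > 0 \<Longrightarrow> \<forall>\<^sub>F r in at_right 0.
                   ennreal (c * r * exp (- \<epsilon>)) \<le> g r \<and> g r \<le> ennreal (c * r * exp \<epsilon>)"
  shows "((\<lambda>r. ennreal r / g r) \<longlongrightarrow> ennreal (1 / c)) (at_right 0)"
proof -
  have real_bounds: "\<forall>\<^sub>F r in at_right 0. 0 < r \<and> g r = ennreal (enn2real (g r)) \<and>
      c * r * exp (- \<epsilon>) \<le> enn2real (g r) \<and> enn2real (g r) \<le> c * r * exp \<epsilon>" if "\<epsilon> > 0" for \<epsilon>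
    using bounds[OF that] eventually_at_right_less[of 0]
  proof eventually_elim
    case (elim r)
    then have "g r \<noteq> \<infinity>" by (auto simp: top_unique)
    then show ?case
      using elim \<open>0 < c\<close> by (cases "g r") (simp_all add: ennreal_le_iff)
  qed
  have "((\<lambda>r. r / enn2real (g r)) \<longlongrightarrow> 1 / c) (at_right 0)"
  proof (rule tendsto_of_exp_bounds)
    fix \<epsilon> :: real assume "\<epsilon> > 0"
    from real_bounds[OF this] show "\<forall>\<^sub>F r in at_right 0.
        1 / c * exp (- \<epsilon>) \<le> r / enn2real (g r) \<and> r / enn2real (g r) \<le> 1 / c * exp \<epsilon>"
    proof eventually_elim
      case (elim r)
      then have "0 < enn2real (g r)"
        using \<open>0 < c\<close> by (smt (verit) exp_gt_zero mult_pos_pos)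
      then show ?case
        using elim \<open>0 < c\<close> by (simp add: field_simps exp_minus)
    qed
  qed
  then have "((\<lambda>r. ennreal (r / enn2real (g r))) \<longlongrightarrow> ennreal (1 / c)) (at_right 0)"
    by (rule tendsto_ennrealI)
  moreover have "\<forall>\<^sub>F r in at_right 0. ennreal (r / enn2real (g r)) = ennreal r / g r"
    using real_bounds[OF zero_less_one]
  proof eventually_elim
    case (elim r)
    then have "0 < enn2real (g r)"
      using \<open>0 < c\<close> by (smt (verit) exp_gt_zero mult_pos_pos)
    then show ?case
      using elim by (metis divide_ennreal less_imp_le)
  qed
  ultimately show ?thesis
    by (rule Lim_transform_eventually)
qed

theorem lemma2p6:
  fixes D :: "complex set" and G :: "complex \<Rightarrow> complex \<Rightarrow> real" and z0 :: complex
  assumes "regular_region D" and "green_function D G" and "z0 \<in> D"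
  shows "\<exists>c. ((\<lambda>z. exp (G z z0 - ln (cmod (z - z0)))) \<longlongrightarrow> c) (at z0) \<and>
             ((\<lambda>r. ennreal r / min_integral D G z0 (- ln r)) \<longlongrightarrow> ennreal (c\<^sup>2 / pi)) (at_right 0)"
proof -
  have D: "open D" "bounded D"
    using assms(1) by (auto simp: regular_region_def)
  have G_cont: "continuous_on (D - {z0}) (\<lambda>z. G z z0)"
    and boundary: "\<forall>\<zeta>\<in>frontier D. ((\<lambda>z. G z z0) \<longlongrightarrow> 0) (at \<zeta> within D)"
    using assms(2,3) harmonic_on_imp_continuous_on by (auto simp: green_function_def)
  obtain r0 h where r0: "0 < r0" "ball z0 r0 \<subseteq> D" and h: "harmonic_on h (ball z0 r0)"
    and G_local: "\<forall>z\<in>ball z0 r0 - {z0}. G z z0 - ln (cmod (z - z0)) = h z"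
    using assms(2,3) unfolding green_function_def by blast
  have h_cont: "isCont h z0"
    using harmonic_on_imp_continuous_on[OF h] r0(1) by (simp add: continuous_on_eq_continuous_at)
  have "((\<lambda>z. exp (h z)) \<longlongrightarrow> exp (h z0)) (at z0)"
    using h_cont by (intro tendsto_intros) (simp add: isCont_def)
  moreover have "\<forall>\<^sub>F z in at z0. exp (h z) = exp (G z z0 - ln (cmod (z - z0)))"
    unfolding eventually_at using r0(1) G_local by (intro exI[of _ r0]) (auto simp: dist_commute)
  ultimately have "((\<lambda>z. exp (G z z0 - ln (cmod (z - z0)))) \<longlongrightarrow> exp (h z0)) (at z0)"
    by (rule Lim_transform_eventually)
  moreover have "((\<lambda>r. ennreal r / min_integral D G z0 (- ln r))
      \<longlongrightarrow> ennreal (1 / (pi * exp (-2 * h z0)))) (at_right 0)"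
    by (intro tendsto_ennreal_divide_at_right_0
        min_integral_asymptotic_bounds[where G=G, OF D G_cont boundary r0 h_cont G_local]) simp
  moreover have "1 / (pi * exp (-2 * h z0)) = (exp (h z0))\<^sup>2 / pi"
    by (simp add: exp_minus exp_double[symmetric] field_simps)
  ultimately show ?thesis by auto
qed

end
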